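(* Let $\mathbb{X}$ be a finite-dimensional real polyhedral Banach space. If a bijective operator $T\in\mathbb{L}(\mathbb{X})$ preserves parallel pairs (or TEA pairs), then $T$ maps each non-zero non-smooth point of $\mathbb{X}$ to a non-smooth point of $\mathbb{X}$.
   Context: A finite-dimensional Banach space is polyhedral if its unit ball has finitely many extreme points. For non-zero $x$, $J(x)=\{f\in S_{\mathbb{X}^*}: f(x)=\|x\|\}$; $x$ is smooth if $J(x)$ is a singleton. $(x,y)$ is a parallel pair if $\|x+\lambda y\|=\|x\|+\|y\|$ for some $\lambda$ with $|\lambda|=1$; a TEA pair if $\|x+y\|=\|x\|+\|y\|$. $T$ preserves parallel (resp. TEA) pairs if $(x,y)$ parallel (resp. TEA) implies $(Tx,Ty)$ parallel (resp. TEA). *)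

theory Defs
  imports "HOL-Analysis.Analysis"
begin

definition fin_dim_space :: "'a::real_normed_vector itself \<Rightarrow> bool" where
  "fin_dim_space _ \<longleftrightarrow> (\<exists>B::'a set. finite B \<and> span B = UNIV)"

definition polyhedral_space :: "'a::real_normed_vector itself \<Rightarrow> bool" where
  "polyhedral_space _ \<longleftrightarrow> finite {x::'a. x extreme_point_of (cball 0 1)}"

definition Jset :: "'a::real_normed_vector \<Rightarrow> ('a \<Rightarrow> real) set" where
  "Jset x = {f. bounded_linear f \<and> onorm f = 1 \<and> f x = norm x}"

definition smooth_point :: "'a::real_normed_vector \<Rightarrow> bool" where
  "smooth_point x \<longleftrightarrow> (\<exists>!f. f \<in> Jset x)"

definition parallel_pair :: "'a::real_normed_vector \<Rightarrow> 'a \<Rightarrow> bool" where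
  "parallel_pair x y \<longleftrightarrow> (\<exists>c::real. \<bar>c\<bar> = 1 \<and> norm (x + c *\<^sub>R y) = norm x + norm y)"

definition TEA_pair :: "'a::real_normed_vector \<Rightarrow> 'a \<Rightarrow> bool" where
  "TEA_pair x y \<longleftrightarrow> norm (x + y) = norm x + norm y"

definition preserves_parallel :: "('a::real_normed_vector \<Rightarrow> 'a) \<Rightarrow> bool" where
  "preserves_parallel T \<longleftrightarrow> (\<forall>x y. parallel_pair x y \<longrightarrow> parallel_pair (T x) (T y))"

definition preserves_TEA :: "('a::real_normed_vector \<Rightarrow> 'a) \<Rightarrow> bool" where
  "preserves_TEA T \<longleftrightarrow> (\<forall>x y. TEA_pair x y \<longrightarrow> TEA_pair (T x) (T y))"

end

theory Submission
  imports Defs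
begin

text \<open>In a finite-dimensional polyhedral space the unit ball is a polytope, so the norm is the
  maximum of finitely many linear functionals; the family can be chosen irredundant, each member
  being the unique maximiser at some point. A nonzero point is smooth iff exactly one member is
  active (attains the norm) there. If \<open>T\<close> preserves TEA or parallel pairs and \<open>z\<close>, \<open>T z\<close> have
  the single active functionals \<open>\<phi>\<close>, \<open>g\<close>, then \<open>T\<close> maps the face where \<open>\<phi>\<close> is active into the
  face where \<open>g\<close> is active. Perturbing \<open>z\<close> within the first face makes such a \<open>g = \<sigma> \<phi>\<close> exist
  for every \<open>\<phi>\<close>; as \<open>T\<close> is onto, \<open>\<sigma>\<close> is a permutation of the family, and it maps the
  functionals active at \<open>x\<close> into those active at \<open>T x\<close>. So \<open>T x\<close> has at least as many active
  functionals as \<open>x\<close>.\<close>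

text \<open>Polytopes are only available in \<open>euclidean_space\<close>, so the space is identified with
  \<open>real^n\<close>, \<open>n\<close> its dimension. The \<open>max 1\<close> is there because a typedef needs a nonempty
  carrier; for a nontrivial space it is just the dimension.\<close>
definition basis_size :: "'a::real_vector itself \<Rightarrow> nat" where
  "basis_size _ = max 1 (dim (UNIV::'a set))"

typedef (overloaded) ('a::real_vector) basis_index = "{..< basis_size TYPE('a)}"
  by (rule exI[of _ 0]) (simp add: basis_size_def)

instance basis_index :: (real_vector) finite
proof
  show "finite (UNIV :: 'a basis_index set)"
    using type_definition.univ[OF type_definition_basis_index] by (metis finite_imageI finite_lessThan)
qed

lemma card_basis_index: "CARD('a::real_vector basis_index) = basis_size TYPE('a)"
  using type_definition.card[OF type_definition_basis_index] by simp

lemma fin_dim_linear_iso_vec: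
  fixes x :: "'a::real_normed_vector"
  assumes "fin_dim_space TYPE('a)" and "x \<noteq> 0"
  obtains M :: "real^('a basis_index) \<Rightarrow> 'a" where "linear M" "bij M"
proof -
  obtain B0 :: "'a set" where B0: "finite B0" "span B0 = UNIV"
    using assms(1) unfolding fin_dim_space_def by blast
  obtain B :: "'a set" where B: "independent B" "UNIV \<subseteq> span B" "card B = dim (UNIV::'a set)"
    using basis_exists[of "UNIV::'a set"] by blast
  have "finite B"
    using independent_span_bound[OF B0(1) B(1)] B0(2) by auto
  moreover have "B \<noteq> {}"
    using B(2) assms(2) by auto
  ultimately have "dim (UNIV::'a set) \<ge> 1"
    using B(3) card_gt_0_iff[of B] by linarith
  then have "dim (UNIV::(real^('a basis_index)) set) = dim (UNIV::'a set)"
    by (simp add: card_basis_index basis_size_def)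
  then obtain M :: "real^('a basis_index) \<Rightarrow> 'a" where "linear M" "range M = UNIV" "inj M"
    using finite_basis_to_basis_subspace_isomorphism[where B="Basis :: (real^('a basis_index)) set",
        OF subspace_UNIV subspace_UNIV _ finite_Basis _ independent_Basis _ _ \<open>finite B\<close> _ B(1) B(2)] B(3)
    by (auto simp: span_Basis)
  then show thesis
    using that by (auto simp: bij_def)
qed

lemma linear_inj_bounded_below_euclidean:
  fixes M :: "'n::euclidean_space \<Rightarrow> 'a::real_normed_vector"
  assumes "linear M" and "inj M"
  obtains m where "m > 0" and "\<And>e. m * norm e \<le> norm (M e)"
proof -
  have contM: "continuous_on UNIV (\<lambda>e. norm (M e))"
    using assms(1) by (intro continuous_intros linear_continuous_on linear_conv_bounded_linear[THEN iffD1])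
  obtain b :: 'n where "b \<in> Basis"
    using nonempty_Basis by blast
  then have "sphere (0::'n) 1 \<noteq> {}"
    by (metis mem_sphere_0 norm_Basis empty_iff)
  then obtain e0 where e0: "e0 \<in> sphere 0 1" and min: "\<And>e. e \<in> sphere 0 1 \<Longrightarrow> norm (M e0) \<le> norm (M e)"
    using continuous_attains_inf[OF compact_sphere _ continuous_on_subset[OF contM]] by blast
  have "M e0 \<noteq> 0"
    using e0 assms by (auto simp: linear_injective_0)
  then show thesis
  proof (rule that[of "norm (M e0)", OF zero_less_norm_iff[THEN iffD2]])
    fix e :: 'n
    show "norm (M e0) * norm e \<le> norm (M e)"
    proof (cases "e = 0")
      case False
      then have "norm (M e0) \<le> norm (M (sgn e))"
        by (intro min) (simp add: norm_sgn)
      also have "\<dots> = norm (M e) / norm e"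
        using assms(1) by (simp add: sgn_div_norm linear_scale divide_inverse_commute)
      finally show ?thesis
        using False by (simp add: field_simps)
    qed (simp add: linear_0[OF assms(1)])
  qed
qed

lemma extreme_point_of_linear_vimage:
  assumes "linear M" and "bij M"
  shows "e extreme_point_of (M -` S) \<longleftrightarrow> M e extreme_point_of S"
proof -
  have "M ` (M -` S) = S" and "M ` {e} = {M e}"
    using assms(2) by (auto simp: bij_def surj_image_vimage_eq)
  then show ?thesis
    using face_of_linear_image[OF assms(1) bij_is_inj[OF assms(2)], of "{e}" "M -` S"]
    by (simp add: face_of_singleton)
qed

lemma compact_linear_vimage_cball:
  fixes M :: "'n::euclidean_space \<Rightarrow> 'a::real_normed_vector"
  assumes "linear M" and "inj M"
  shows "compact (M -` cball 0 r)"
proof -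
  obtain m where "m > 0" and m: "\<And>e. m * norm e \<le> norm (M e)"
    using linear_inj_bounded_below_euclidean[OF assms] by blast
  have "M -` cball 0 r \<subseteq> cball 0 (r / m)"
    using \<open>m > 0\<close> by (auto simp: field_simps intro: order_trans[OF m])
  then have "bounded (M -` cball 0 r)"
    by (rule bounded_subset[OF bounded_cball])
  moreover have "closed (M -` cball 0 r)"
    using assms(1) by (intro closed_vimage closed_cball linear_continuous_on linear_conv_bounded_linear[THEN iffD1])
  ultimately show ?thesis
    by (simp add: compact_eq_bounded_closed)
qed

lemma polyhedron_linear_vimage_unit_ball:
  fixes M :: "'n::euclidean_space \<Rightarrow> 'a::real_normed_vector"
  assumes "polyhedral_space TYPE('a)" and "linear M" and "bij M"
  shows "polyhedron (M -` cball 0 1)"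
proof -
  let ?P = "M -` cball 0 1"
  have "{e. e extreme_point_of ?P} = M -` {y. y extreme_point_of cball 0 1}"
    by (simp only: vimage_Collect_eq extreme_point_of_linear_vimage[OF assms(2,3)])
  moreover have "finite (M -` {y. y extreme_point_of cball 0 1})"
    using assms(1) finite_vimageI bij_is_inj[OF assms(3)] unfolding polyhedral_space_def by blast
  ultimately have "finite {e. e extreme_point_of ?P}"
    by (simp only:)
  moreover have "compact ?P"
    using compact_linear_vimage_cball assms(2,3) bij_is_inj by blast
  moreover have "convex ?P"
    using convex_linear_vimage[OF assms(2) convex_cball] .
  ultimately have "polytope ?P"
    unfolding polytope_def using Krein_Milman_Minkowski by blast
  then show ?thesis
    by (rule polytope_imp_polyhedron)
qed

lemma gauge_unique:
  fixes a b :: real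
  assumes "b > 0" and "\<And>t. t > 0 \<Longrightarrow> t * a \<le> 1 \<longleftrightarrow> t * b \<le> 1"
  shows "a = b"
proof -
  have "a \<le> b"
    using assms(2)[of "1 / b"] assms(1) by (simp add: field_simps)
  moreover have "\<not> a < b"
  proof
    assume "a < b"
    show False
    proof (cases "a > 0")
      case True
      then show False
        using assms(2)[of "1 / a"] \<open>a < b\<close> by (simp add: field_simps)
    next
      case False
      then show False
        using assms(2)[of "2 / b"] assms(1) by (simp add: field_simps mult_nonneg_nonpos)
    qed
  qed
  ultimately show ?thesis
    by simp
qed

lemma norm_eq_Max_if_unit_ball_eq:
  fixes F :: "('a::real_normed_vector \<Rightarrow> real) set"
  assumes "finite F" and "F \<noteq> {}" and "\<And>\<phi>. \<phi> \<in> F \<Longrightarrow> linear \<phi>"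
    and ball: "cball 0 1 = {y. \<forall>\<phi>\<in>F. \<phi> y \<le> 1}"
  shows "norm y = Max ((\<lambda>\<phi>. \<phi> y) ` F)"
proof (cases "y = 0")
  case True
  then show ?thesis
    using assms(2,3) by (simp add: linear_0 image_constant_conv)
next
  case False
  show ?thesis
  proof (rule gauge_unique[symmetric])
    fix t :: real
    assume "t > 0"
    have "t * norm y \<le> 1 \<longleftrightarrow> t *\<^sub>R y \<in> cball 0 1"
      using \<open>t > 0\<close> by simp
    also have "\<dots> \<longleftrightarrow> (\<forall>\<phi>\<in>F. t * \<phi> y \<le> 1)"
      using ball assms(3) by (simp add: linear_scale)
    also have "\<dots> \<longleftrightarrow> (\<forall>\<phi>\<in>F. \<phi> y \<le> 1 / t)"
      using \<open>t > 0\<close> by (simp add: pos_le_divide_eq mult.commute)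
    also have "\<dots> \<longleftrightarrow> Max ((\<lambda>\<phi>. \<phi> y) ` F) \<le> 1 / t"
      using assms(1,2) by (simp add: Max_le_iff)
    also have "\<dots> \<longleftrightarrow> t * Max ((\<lambda>\<phi>. \<phi> y) ` F) \<le> 1"
      using \<open>t > 0\<close> by (simp add: pos_le_divide_eq mult.commute)
    finally show "t * Max ((\<lambda>\<phi>. \<phi> y) ` F) \<le> 1 \<longleftrightarrow> t * norm y \<le> 1"
      by simp
  qed (use False in simp)
qed

lemma halfspace_containing_linear_vimage_ball_pos:
  fixes M :: "'n::euclidean_space \<Rightarrow> 'a::real_normed_vector"
  assumes "linear M" and "inj M" and "a \<noteq> 0" and "M -` cball 0 1 \<subseteq> {e. a \<bullet> e \<le> b}"
  shows "b > 0"
proof -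
  have "M a \<noteq> 0"
    using assms(1-3) linear_injective_0 by blast
  define e where "e = (1 / norm (M a)) *\<^sub>R a"
  have "norm (M e) = 1"
    using \<open>M a \<noteq> 0\<close> assms(1) by (simp add: e_def linear_scale)
  then have "e \<in> M -` cball 0 1"
    by simp
  then have "a \<bullet> e \<le> b"
    using assms(4) by blast
  moreover have "a \<bullet> e > 0"
    using assms(3) \<open>M a \<noteq> 0\<close> by (simp add: e_def)
  ultimately show ?thesis
    by linarith
qed

lemma linear_vimage_unit_ball_eq_halfspaces:
  fixes M :: "'n::euclidean_space \<Rightarrow> 'a::real_normed_vector"
  assumes "polyhedral_space TYPE('a)" and "linear M" and "bij M"
  obtains H :: "('n \<times> real) set"
  where "finite H" "\<And>a b. (a, b) \<in> H \<Longrightarrow> b > 0" "M -` cball 0 1 = {e. \<forall>(a, b)\<in>H. a \<bullet> e \<le> b}"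
proof -
  obtain H where H: "finite H" "M -` cball 0 1 = \<Inter>H"
    and "\<forall>h\<in>H. \<exists>a b. a \<noteq> 0 \<and> h = {e. a \<bullet> e \<le> b}"
    using polyhedron_linear_vimage_unit_ball[OF assms] unfolding polyhedron_def by blast
  then obtain a b where ab: "\<And>h. h \<in> H \<Longrightarrow> a h \<noteq> 0 \<and> h = {e. a h \<bullet> e \<le> b h}"
    by (metis (no_types))
  have b_pos: "b h > 0" if "h \<in> H" for h
  proof -
    have "M -` cball 0 1 \<subseteq> {e. a h \<bullet> e \<le> b h}"
      using H(2) that ab[OF that] by blast
    then show ?thesis
      using ab[OF that] halfspace_containing_linear_vimage_ball_pos[OF assms(2) bij_is_inj[OF assms(3)]]
      by blast
  qed
  have "e \<in> h \<longleftrightarrow> a h \<bullet> e \<le> b h" if "h \<in> H" for e h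
    using ab[OF that] by blast
  then have "M -` cball 0 1 = {e. \<forall>(a', b')\<in>(\<lambda>h. (a h, b h)) ` H. a' \<bullet> e \<le> b'}"
    using H(2) by auto
  then show thesis
    using that[of "(\<lambda>h. (a h, b h)) ` H"] H(1) b_pos by auto
qed

lemma unit_ball_eq_finite_halfspaces:
  fixes x :: "'a::real_normed_vector"
  assumes "fin_dim_space TYPE('a)" and "polyhedral_space TYPE('a)" and "x \<noteq> 0"
  obtains F :: "('a \<Rightarrow> real) set"
  where "finite F" "F \<noteq> {}" "\<And>\<phi>. \<phi> \<in> F \<Longrightarrow> linear \<phi>" "cball 0 1 = {y. \<forall>\<phi>\<in>F. \<phi> y \<le> 1}"
proof -
  obtain M :: "real^('a basis_index) \<Rightarrow> 'a" where M: "linear M" "bij M"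
    using fin_dim_linear_iso_vec assms(1,3) by blast
  obtain L where L: "linear L" "M \<circ> L = id"
    using linear_surjective_right_inverse M bij_is_surj by blast
  obtain H where H: "finite H" "\<And>a b. (a, b) \<in> H \<Longrightarrow> b > 0"
    and ball_H: "M -` cball 0 1 = {e. \<forall>(a, b)\<in>H. a \<bullet> e \<le> b}"
    by (rule linear_vimage_unit_ball_eq_halfspaces[OF assms(2) M], rule that)
  define F where "F = (\<lambda>(a, b) y. (a \<bullet> L y) / b) ` H"
  have "y \<in> cball 0 1 \<longleftrightarrow> (\<forall>\<phi>\<in>F. \<phi> y \<le> 1)" for y
  proof -
    have "y \<in> cball 0 1 \<longleftrightarrow> L y \<in> M -` cball 0 1"
      using L(2) by (simp add: pointfree_idE)
    also have "\<dots> \<longleftrightarrow> (\<forall>(a, b)\<in>H. (a \<bullet> L y) / b \<le> 1)"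
      using ball_H H(2) by (auto simp: divide_le_eq_1_pos)
    finally show ?thesis
      by (auto simp: F_def)
  qed
  then have ball: "cball 0 1 = {y. \<forall>\<phi>\<in>F. \<phi> y \<le> 1}"
    by blast
  show thesis
  proof
    show "finite F"
      using H(1) by (simp add: F_def)
    show "\<phi> \<in> F \<Longrightarrow> linear \<phi>" for \<phi>
      using L(1) by (auto simp: F_def linear_add linear_scale inner_add_right add_divide_distrib intro!: linearI)
    show "F \<noteq> {}"
    proof
      assume "F = {}"
      then have "(2 / norm x) *\<^sub>R x \<in> cball 0 1"
        using ball by simp
      then show False
        using assms(3) by simp
    qed
  qed (fact ball)
qed

lemma Max_image_remove_dominated:
  fixes G :: "('a \<Rightarrow> 'b::linorder) set"
  assumes "finite G" and "\<phi> \<in> G" and "\<theta> \<in> G - {\<phi>}" and "\<phi> y \<le> \<theta> y"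
  shows "Max ((\<lambda>\<psi>. \<psi> y) ` G) = Max ((\<lambda>\<psi>. \<psi> y) ` (G - {\<phi>}))"
proof -
  have "\<theta> y \<le> Max ((\<lambda>\<psi>. \<psi> y) ` (G - {\<phi>}))"
    using assms(1,3) by (intro Max_ge) auto
  then have "\<phi> y \<le> Max ((\<lambda>\<psi>. \<psi> y) ` (G - {\<phi>}))"
    using assms(4) by (rule order_trans[rotated])
  moreover have "(\<lambda>\<psi>. \<psi> y) ` G = insert (\<phi> y) ((\<lambda>\<psi>. \<psi> y) ` (G - {\<phi>}))"
    using assms(2) by blast
  moreover have "G - {\<phi>} \<noteq> {}"
    using assms(3) by blast
  ultimately show ?thesis
    using assms(1) by (simp add: max_absorb2)
qed

lemma exists_irredundant_Max_subfamily:
  fixes F :: "('a \<Rightarrow> 'b::linorder) set" and f :: "'a \<Rightarrow> 'b"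
  assumes "finite F" and "F \<noteq> {}" and "\<And>y. f y = Max ((\<lambda>\<phi>. \<phi> y) ` F)"
  obtains G where "G \<subseteq> F" "G \<noteq> {}" "\<And>y. f y = Max ((\<lambda>\<phi>. \<phi> y) ` G)"
    and "\<And>\<phi>. \<phi> \<in> G \<Longrightarrow> \<exists>y. \<forall>\<theta>\<in>G - {\<phi>}. \<theta> y < \<phi> y"
proof -
  define represents where
    "represents G \<longleftrightarrow> G \<subseteq> F \<and> G \<noteq> {} \<and> (\<forall>y. f y = Max ((\<lambda>\<phi>. \<phi> y) ` G))" for G
  have "represents F"
    using assms by (simp add: represents_def)
  then obtain G where G: "represents G" and least: "\<And>G'. represents G' \<Longrightarrow> card G \<le> card G'"
    using ex_has_least_nat[of represents F card] by blast
  have "finite G"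
    using G assms(1) finite_subset by (auto simp: represents_def)
  have "\<exists>y. \<forall>\<theta>\<in>G - {\<phi>}. \<theta> y < \<phi> y" if "\<phi> \<in> G" for \<phi>
  proof (rule ccontr)
    assume "\<nexists>y. \<forall>\<theta>\<in>G - {\<phi>}. \<theta> y < \<phi> y"
    then have dominated: "\<exists>\<theta>\<in>G - {\<phi>}. \<phi> y \<le> \<theta> y" for y
      by (meson not_less)
    then have "G - {\<phi>} \<noteq> {}"
      by blast
    have "Max ((\<lambda>\<psi>. \<psi> y) ` G) = Max ((\<lambda>\<psi>. \<psi> y) ` (G - {\<phi>}))" for y
      using dominated[of y] Max_image_remove_dominated[OF \<open>finite G\<close> that] by blast
    then have "represents (G - {\<phi>})"
      using G \<open>G - {\<phi>} \<noteq> {}\<close> by (auto simp: represents_def)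
    moreover have "card (G - {\<phi>}) < card G"
      using \<open>finite G\<close> that by (rule card_Diff1_less)
    ultimately show False
      using least by (meson leD)
  qed
  then show thesis
    using that G by (auto simp: represents_def)
qed

lemma eventually_at_right_witness:
  assumes "\<forall>\<^sub>F s in at_right (a::real). P s"
  obtains s where "s > a" and "P s"
  using eventually_happens'[OF trivial_limit_at_right_real eventually_conj[OF eventually_at_right_less assms]]
  by blast

lemma eventually_linear_less_at_right:
  fixes \<phi> \<theta> :: "'a::real_vector \<Rightarrow> real"
  assumes "linear \<phi>" and "linear \<theta>" and "\<theta> w < \<phi> w \<or> (\<theta> w = \<phi> w \<and> \<theta> v < \<phi> v)"
  shows "\<forall>\<^sub>F s in at_right 0. \<theta> (w + s *\<^sub>R v) < \<phi> (w + s *\<^sub>R v)"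
proof -
  have "\<forall>\<^sub>F s in at_right 0. \<theta> w + s * \<theta> v < \<phi> w + s * \<phi> v"
    using assms(3)
  proof
    assume "\<theta> w < \<phi> w"
    moreover have lim: "((\<lambda>s. (\<phi> w + s * \<phi> v) - (\<theta> w + s * \<theta> v)) \<longlongrightarrow> \<phi> w - \<theta> w) (at_right 0)"
      by (auto intro!: tendsto_eq_intros)
    ultimately have "\<forall>\<^sub>F s in at_right 0. 0 < (\<phi> w + s * \<phi> v) - (\<theta> w + s * \<theta> v)"
      by (intro order_tendstoD(1)[OF lim]) simp
    then show ?thesis
      by (rule eventually_mono) simp
  next
    assume "\<theta> w = \<phi> w \<and> \<theta> v < \<phi> v"
    show ?thesis
      using eventually_at_right_less[of "0::real"]
    proof (rule eventually_mono)
      fix s :: real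
      assume "0 < s"
      then show "\<theta> w + s * \<theta> v < \<phi> w + s * \<phi> v"
        using \<open>\<theta> w = \<phi> w \<and> \<theta> v < \<phi> v\<close> by simp
    qed
  qed
  then show ?thesis
    using assms(1,2) by (simp add: linear_add linear_scale)
qed

lemma exists_separating_point:
  fixes g1 g2 :: "'a \<Rightarrow> 'b::linorder"
  assumes "g1 \<in> A" and "g2 \<in> A" and "g1 \<noteq> g2"
  obtains h1 h2 v where "h1 \<in> A" and "h2 \<in> A" and "h2 v < h1 v"
proof -
  obtain v where "g1 v \<noteq> g2 v"
    using assms(3) by (metis ext)
  then consider "g2 v < g1 v" | "g1 v < g2 v"
    by (meson linorder_neqE)
  then show thesis
    using that assms(1,2) by cases blast+
qed

locale polyhedral_norm =
  fixes F :: "('a::real_normed_vector \<Rightarrow> real) set"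
  assumes finite_F: "finite F" and F_nonempty: "F \<noteq> {}"
    and linear_F: "\<And>\<phi>. \<phi> \<in> F \<Longrightarrow> linear \<phi>"
    and norm_eq_Max: "\<And>y. norm y = Max ((\<lambda>\<phi>. \<phi> y) ` F)"
    and irredundant: "\<And>\<phi>. \<phi> \<in> F \<Longrightarrow> \<exists>y. \<forall>\<theta>\<in>F - {\<phi>}. \<theta> y < \<phi> y"
begin

definition active :: "'a \<Rightarrow> ('a \<Rightarrow> real) set" where
  "active y = {\<phi>\<in>F. \<phi> y = norm y}"

lemma le_norm: "\<phi> \<in> F \<Longrightarrow> \<phi> y \<le> norm y"
  using norm_eq_Max[of y] finite_F by simp

lemma abs_le_norm: "\<phi> \<in> F \<Longrightarrow> \<bar>\<phi> y\<bar> \<le> norm y"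
  using le_norm[of \<phi> y] le_norm[of \<phi> "- y"] linear_F by (simp add: linear_neg)

lemma active_nonempty: "active y \<noteq> {}"
proof -
  have "Max ((\<lambda>\<phi>. \<phi> y) ` F) \<in> (\<lambda>\<phi>. \<phi> y) ` F"
    using finite_F F_nonempty by simp
  then show ?thesis
    using norm_eq_Max[of y] by (auto simp: active_def)
qed

lemma finite_active: "finite (active y)"
  using finite_F by (simp add: active_def)

lemma active_zero: "active 0 = F"
  using linear_F by (auto simp: active_def linear_0)

lemma active_add:
  assumes "\<phi> \<in> active y" and "\<phi> \<in> active w"
  shows "\<phi> \<in> active (y + w)"
proof -
  have "\<phi> \<in> F" and "\<phi> (y + w) = norm y + norm w"
    using assms linear_F by (auto simp: active_def linear_add)
  then show ?thesis
    using le_norm[of \<phi> "y + w"] norm_triangle_ineq[of y w] by (simp add: active_def)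
qed

lemma active_scaleR: "\<phi> \<in> active y \<Longrightarrow> c \<ge> 0 \<Longrightarrow> \<phi> \<in> active (c *\<^sub>R y)"
  using linear_F by (auto simp: active_def linear_scale)

lemma zero_if_F_singleton:
  fixes y :: 'a
  assumes "F = {\<phi>}"
  shows "y = 0"
proof -
  have "\<phi> \<in> active w" for w
  proof -
    obtain \<theta> where "\<theta> \<in> active w"
      using active_nonempty by blast
    moreover have "\<theta> \<in> F"
      using \<open>\<theta> \<in> active w\<close> by (simp add: active_def)
    then have "\<theta> = \<phi>"
      using assms by simp
    ultimately show ?thesis
      by simp
  qed
  then have "\<phi> y = norm y" and "\<phi> (- y) = norm y"
    by (auto simp: active_def)
  then show "y = 0"
    using linear_F[of \<phi>] assms by (simp add: linear_neg)
qed

lemma active_eq_singleton_iff: "active z = {\<phi>} \<longleftrightarrow> \<phi> \<in> F \<and> (\<forall>\<theta>\<in>F - {\<phi>}. \<theta> z < \<phi> z)"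
proof
  assume singleton: "active z = {\<phi>}"
  then have "\<phi> \<in> F" and "\<phi> z = norm z"
    by (auto simp: active_def)
  moreover have "\<theta> z < \<phi> z" if "\<theta> \<in> F - {\<phi>}" for \<theta>
  proof -
    have "\<theta> z \<noteq> norm z"
      using singleton that by (auto simp: active_def)
    then show ?thesis
      using le_norm[of \<theta> z] that \<open>\<phi> z = norm z\<close> by simp
  qed
  ultimately show "\<phi> \<in> F \<and> (\<forall>\<theta>\<in>F - {\<phi>}. \<theta> z < \<phi> z)"
    by blast
next
  assume strict: "\<phi> \<in> F \<and> (\<forall>\<theta>\<in>F - {\<phi>}. \<theta> z < \<phi> z)"
  have unique: "\<theta> = \<phi>" if "\<theta> \<in> active z" for \<theta>
  proof (rule ccontr)
    assume "\<theta> \<noteq> \<phi>"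
    have "\<theta> \<in> F" and "\<theta> z = norm z"
      using that by (auto simp: active_def)
    then have "\<theta> z < \<phi> z"
      using strict \<open>\<theta> \<noteq> \<phi>\<close> by blast
    then show False
      using le_norm[of \<phi> z] strict \<open>\<theta> z = norm z\<close> by linarith
  qed
  then show "active z = {\<phi>}"
    using active_nonempty by blast
qed

lemma exists_active_singleton: "\<phi> \<in> F \<Longrightarrow> \<exists>y. active y = {\<phi>}"
  using irredundant by (simp add: active_eq_singleton_iff)

lemma TEA_pair_iff_active: "TEA_pair y w \<longleftrightarrow> active y \<inter> active w \<noteq> {}"
proof
  assume "TEA_pair y w"
  obtain \<phi> where "\<phi> \<in> active (y + w)"
    using active_nonempty by blast
  then have "\<phi> \<in> F" "\<phi> y + \<phi> w = norm y + norm w"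
    using \<open>TEA_pair y w\<close> linear_F by (auto simp: active_def TEA_pair_def linear_add)
  then show "active y \<inter> active w \<noteq> {}"
    using le_norm[of \<phi> y] le_norm[of \<phi> w] by (auto simp: active_def)
next
  assume "active y \<inter> active w \<noteq> {}"
  then obtain \<phi> where "\<phi> \<in> active (y + w)" "\<phi> \<in> active y" "\<phi> \<in> active w"
    using active_add by blast
  then show "TEA_pair y w"
    using linear_F by (auto simp: active_def TEA_pair_def linear_add)
qed

lemma active_subset_Jset:
  assumes "y \<noteq> 0"
  shows "active y \<subseteq> Jset y"
proof
  fix \<phi>
  assume "\<phi> \<in> active y"
  then have "\<phi> \<in> F" and attains: "\<phi> y = norm y"
    by (auto simp: active_def)
  have "bounded_linear \<phi>"
    using linear_F[OF \<open>\<phi> \<in> F\<close>] abs_le_norm[OF \<open>\<phi> \<in> F\<close>]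
    by (intro bounded_linear_intro[where K=1]) (auto simp: linear_add linear_scale)
  have "onorm \<phi> \<le> 1"
    using abs_le_norm[OF \<open>\<phi> \<in> F\<close>] by (intro onorm_bound) auto
  moreover have "norm y \<le> onorm \<phi> * norm y"
    using onorm[OF \<open>bounded_linear \<phi>\<close>, of y] attains by simp
  then have "1 \<le> onorm \<phi>"
    using assms by simp
  ultimately show "\<phi> \<in> Jset y"
    using \<open>bounded_linear \<phi>\<close> attains by (simp add: Jset_def)
qed

lemma eventually_active_singleton:
  assumes "active z = {\<phi>}"
  shows "\<forall>\<^sub>F s in at_right 0. active (z + s *\<^sub>R d) = {\<phi>}"
proof -
  have "\<phi> \<in> F"
    using assms by (simp add: active_eq_singleton_iff)
  have "\<forall>\<^sub>F s in at_right 0. \<forall>\<theta>\<in>F - {\<phi>}. \<theta> (z + s *\<^sub>R d) < \<phi> (z + s *\<^sub>R d)"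
    using finite_F assms \<open>\<phi> \<in> F\<close> linear_F
    by (intro eventually_ball_finite ballI eventually_linear_less_at_right)
      (auto simp: active_eq_singleton_iff)
  then show ?thesis
    using \<open>\<phi> \<in> F\<close> by (simp add: active_eq_singleton_iff)
qed

lemma eventually_active_shrinks:
  assumes "g1 \<in> active w" and "g2 \<in> active w" and "g2 v < g1 v"
  shows "\<forall>\<^sub>F s in at_right 0. active (w + s *\<^sub>R v) \<subseteq> active w - {g2}"
proof -
  have "g1 \<in> F"
    using assms(1) by (simp add: active_def)
  have "\<forall>\<^sub>F s in at_right 0. \<forall>\<theta>\<in>F. \<theta> \<notin> active w - {g2} \<longrightarrow> \<theta> (w + s *\<^sub>R v) < g1 (w + s *\<^sub>R v)"
  proof (intro eventually_ball_finite finite_F ballI)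
    fix \<theta>
    assume "\<theta> \<in> F"
    have "\<theta> \<notin> active w - {g2} \<Longrightarrow> \<theta> w < g1 w \<or> (\<theta> w = g1 w \<and> \<theta> v < g1 v)"
      using assms le_norm[OF \<open>\<theta> \<in> F\<close>, of w] \<open>\<theta> \<in> F\<close> by (auto simp: active_def)
    then show "\<forall>\<^sub>F s in at_right 0. \<theta> \<notin> active w - {g2} \<longrightarrow> \<theta> (w + s *\<^sub>R v) < g1 (w + s *\<^sub>R v)"
      using eventually_linear_less_at_right[OF linear_F linear_F] \<open>\<theta> \<in> F\<close> \<open>g1 \<in> F\<close>
      by (cases "\<theta> \<in> active w - {g2}") auto
  qed
  then show ?thesis
  proof eventually_elim
    case (elim s)
    show ?case
    proof
      fix \<theta>
      assume "\<theta> \<in> active (w + s *\<^sub>R v)"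
      then have "\<not> \<theta> (w + s *\<^sub>R v) < g1 (w + s *\<^sub>R v)"
        using le_norm[OF \<open>g1 \<in> F\<close>] by (simp add: active_def not_less)
      then show "\<theta> \<in> active w - {g2}"
        using elim \<open>\<theta> \<in> active (w + s *\<^sub>R v)\<close> by (auto simp: active_def)
    qed
  qed
qed

lemma Jset_subset_if_active_singleton:
  assumes "active y = {\<phi>}"
  shows "Jset y \<subseteq> {\<phi>}"
proof
  fix f
  assume "f \<in> Jset y"
  then have "bounded_linear f" "onorm f = 1" and f_y: "f y = norm y"
    by (auto simp: Jset_def)
  then have "linear f" and f_le: "\<And>v. f v \<le> norm v"
    using onorm[OF \<open>bounded_linear f\<close>] by (auto simp: bounded_linear.linear abs_le_iff)
  have "\<phi> \<in> F" and \<phi>_y: "\<phi> y = norm y"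
    using assms by (auto simp: active_def)
  have below: "f d \<le> \<phi> d" for d
  proof -
    obtain s :: real where "s > 0" and "active (y + s *\<^sub>R d) = {\<phi>}"
      using eventually_at_right_witness[OF eventually_active_singleton[OF assms]] by blast
    then have "\<phi> \<in> active (y + s *\<^sub>R d)"
      by simp
    then have "f (y + s *\<^sub>R d) \<le> \<phi> (y + s *\<^sub>R d)"
      using f_le by (simp add: active_def)
    then have "s * f d \<le> s * \<phi> d"
      using \<open>linear f\<close> linear_F[OF \<open>\<phi> \<in> F\<close>] f_y \<phi>_y by (simp add: linear_add linear_scale)
    then show ?thesis
      using \<open>s > 0\<close> by simp
  qed
  have "f = \<phi>"
  proof
    fix d
    show "f d = \<phi> d"
      using below[of d] below[of "- d"] \<open>linear f\<close> linear_F[OF \<open>\<phi> \<in> F\<close>] by (simp add: linear_neg)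
  qed
  then show "f \<in> {\<phi>}"
    by simp
qed

lemma smooth_point_iff_card_active:
  assumes "y \<noteq> 0"
  shows "smooth_point y \<longleftrightarrow> card (active y) = 1"
proof
  assume "smooth_point y"
  then obtain f where "\<And>f'. f' \<in> Jset y \<Longrightarrow> f' = f"
    unfolding smooth_point_def by blast
  then have "active y \<subseteq> {f}"
    using active_subset_Jset[OF assms] by blast
  then have "active y = {f}"
    using active_nonempty by blast
  then show "card (active y) = 1"
    by simp
next
  assume "card (active y) = 1"
  then obtain \<phi> where "active y = {\<phi>}"
    by (auto simp: card_1_singleton_iff)
  then have "Jset y = {\<phi>}"
    using Jset_subset_if_active_singleton active_subset_Jset[OF assms] by blast
  then show "smooth_point y"
    by (simp add: smooth_point_def)
qed

lemma exists_active_image_shrinks: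
  assumes "linear T" and "surj T" and "active z = {\<phi>}" and "\<nexists>g. active (T z) = {g}"
  obtains z' where "active z' = {\<phi>}" and "card (active (T z')) < card (active (T z))"
proof -
  obtain g1 where "g1 \<in> active (T z)"
    using active_nonempty by blast
  then obtain g2 where "g2 \<in> active (T z)" and "g2 \<noteq> g1"
    using assms(4) by blast
  then obtain h1 h2 v where h: "h1 \<in> active (T z)" "h2 \<in> active (T z)" "h2 v < h1 v"
    using exists_separating_point[OF _ \<open>g1 \<in> active (T z)\<close>] by blast
  obtain d where "T d = v"
    using assms(2) by (metis surjD)
  obtain s where s: "active (z + s *\<^sub>R d) = {\<phi>}"
    and shrinks: "active (T z + s *\<^sub>R v) \<subseteq> active (T z) - {h2}"
    using eventually_at_right_witness[OF eventually_conj[OF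
        eventually_active_singleton[OF assms(3)] eventually_active_shrinks[OF h]]] by blast
  have "T (z + s *\<^sub>R d) = T z + s *\<^sub>R v"
    using assms(1) \<open>T d = v\<close> by (simp add: linear_add linear_scale)
  moreover have "active (T z + s *\<^sub>R v) \<subset> active (T z)"
    using shrinks h(2) by blast
  ultimately have "card (active (T (z + s *\<^sub>R d))) < card (active (T z))"
    by (simp add: psubset_card_mono finite_active)
  then show thesis
    using that s by blast
qed

lemma exists_active_singleton_image:
  assumes "linear T" and "surj T" and "active z = {\<phi>}"
  shows "\<exists>z g. active z = {\<phi>} \<and> active (T z) = {g}"
  using assms(3)
proof (induction "card (active (T z))" arbitrary: z rule: less_induct)
  case less
  show ?case
  proof (cases "\<exists>g. active (T z) = {g}")
    case True
    then show ?thesis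
      using less.prems by blast
  next
    case False
    then obtain z' where "active z' = {\<phi>}" and "card (active (T z')) < card (active (T z))"
      using exists_active_image_shrinks[OF assms(1,2) less.prems] by blast
    then show ?thesis
      using less.hyps by blast
  qed
qed

lemma preserves_TEA_maps_face:
  assumes "preserves_TEA T" and "active z = {\<phi>}" and "active (T z) = {g}" and "\<phi> \<in> active u"
  shows "g \<in> active (T u)"
proof -
  have "TEA_pair z u"
    using assms(2,4) TEA_pair_iff_active by blast
  then have "TEA_pair (T z) (T u)"
    using assms(1) by (simp add: preserves_TEA_def)
  then show ?thesis
    using assms(3) by (auto simp: TEA_pair_iff_active)
qed

lemma preserves_parallel_abs_on_face:
  assumes "preserves_parallel T" and "active z = {\<phi>}" and "active (T z) = {g}" and "\<phi> \<in> active w"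
  shows "\<bar>g (T w)\<bar> = norm (T w)"
proof -
  have "TEA_pair z w"
    using assms(2,4) TEA_pair_iff_active by blast
  then have "parallel_pair z w"
    unfolding parallel_pair_def TEA_pair_def by (intro exI[of _ 1]) simp
  then obtain c :: real where "\<bar>c\<bar> = 1" and "norm (T z + c *\<^sub>R T w) = norm (T z) + norm (T w)"
    using assms(1) unfolding preserves_parallel_def parallel_pair_def by blast
  then have "TEA_pair (T z) (c *\<^sub>R T w)"
    by (simp add: TEA_pair_def)
  then have "g \<in> active (c *\<^sub>R T w)"
    using assms(3) by (auto simp: TEA_pair_iff_active)
  then have "c * g (T w) = norm (T w)"
    using \<open>\<bar>c\<bar> = 1\<close> linear_F by (auto simp: active_def linear_scale)
  then have "\<bar>c * g (T w)\<bar> = norm (T w)"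
    by simp
  then show ?thesis
    using \<open>\<bar>c\<bar> = 1\<close> by (simp add: abs_mult)
qed

text \<open>By the previous lemma \<open>g \<circ> T\<close> is \<open>\<plusminus>\<parallel>T \<cdot>\<parallel>\<close> on the face of \<open>\<phi>\<close>. A point where it is
  \<open>-\<parallel>T u\<parallel>\<close> could be moved along the face, by adding a positive multiple of \<open>z\<close>, to a
  nonzero point where it vanishes, which \<open>T\<close> would have to map to \<open>0\<close>.\<close>
lemma preserves_parallel_nonneg_on_face:
  assumes "preserves_parallel T" and "linear T" and "inj T" and "z \<noteq> 0"
    and "active z = {\<phi>}" and "active (T z) = {g}" and "\<phi> \<in> active u"
  shows "g (T u) \<ge> 0"
proof (rule ccontr)
  assume "\<not> g (T u) \<ge> 0"
  have "g \<in> F" "\<phi> \<in> F" "g (T z) = norm (T z)" "\<phi> z = norm z"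
    using assms(5,6) by (auto simp: active_def)
  have on_face: "\<bar>g (T w)\<bar> = norm (T w)" if "\<phi> \<in> active w" for w
    using preserves_parallel_abs_on_face[OF assms(1,5,6) that] .
  have "\<bar>g (T u)\<bar> = - g (T u)"
    using \<open>\<not> g (T u) \<ge> 0\<close> by simp
  then have g_Tu: "g (T u) = - norm (T u)"
    using on_face[OF assms(7)] by linarith
  then have "T u \<noteq> 0"
    using \<open>\<not> g (T u) \<ge> 0\<close> by auto
  have "T z \<noteq> 0"
    using assms(2-4) linear_injective_0 by blast
  define l where "l = norm (T u) / norm (T z)"
  have "l > 0"
    using \<open>T u \<noteq> 0\<close> \<open>T z \<noteq> 0\<close> by (simp add: l_def)
  have "\<phi> \<in> active (u + l *\<^sub>R z)"
    using active_add[OF assms(7) active_scaleR] assms(5) \<open>l > 0\<close> by auto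
  moreover have "g (T (u + l *\<^sub>R z)) = 0"
    using assms(2) linear_F[OF \<open>g \<in> F\<close>] g_Tu \<open>g (T z) = norm (T z)\<close> \<open>T z \<noteq> 0\<close>
    by (simp add: linear_add linear_scale l_def)
  ultimately have "T (u + l *\<^sub>R z) = 0"
    using on_face[of "u + l *\<^sub>R z"] by simp
  then have "u + l *\<^sub>R z = 0"
    using linear_injective_0[OF assms(2)] assms(3) by blast
  moreover have "\<phi> (u + l *\<^sub>R z) = norm u + l * norm z"
    using assms(7) \<open>\<phi> z = norm z\<close> linear_F[OF \<open>\<phi> \<in> F\<close>] by (simp add: active_def linear_add linear_scale)
  moreover have "norm u + l * norm z > 0"
    using \<open>l > 0\<close> assms(4) by (simp add: add_nonneg_pos)
  ultimately show False
    using linear_F[OF \<open>\<phi> \<in> F\<close>] by (simp add: linear_0)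
qed

lemma preserves_parallel_maps_face:
  assumes "preserves_parallel T" and "linear T" and "inj T"
    and "active z = {\<phi>}" and "active (T z) = {g}" and "\<phi> \<in> active u"
  shows "g \<in> active (T u)"
proof (cases "z = 0")
  case True
  then have "F = {\<phi>}"
    using assms(4) active_zero by simp
  then have "T u = 0"
    by (rule zero_if_F_singleton)
  moreover have "g \<in> F"
    using assms(5) by (auto simp: active_def)
  ultimately show ?thesis
    using active_zero by simp
next
  case False
  have "\<bar>g (T u)\<bar> = norm (T u)" and "g (T u) \<ge> 0"
    using preserves_parallel_abs_on_face[OF assms(1,4-6)]
      preserves_parallel_nonneg_on_face[OF assms(1-3) False assms(4-6)] by auto
  moreover have "g \<in> F"
    using assms(5) by (auto simp: active_def)
  ultimately show ?thesis
    by (simp add: active_def)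
qed

lemma preserving_maps_face:
  assumes "preserves_parallel T \<or> preserves_TEA T" and "linear T" and "inj T"
    and "active z = {\<phi>}" and "active (T z) = {g}" and "\<phi> \<in> active u"
  shows "g \<in> active (T u)"
  using assms(1)
proof
  assume "preserves_parallel T"
  then show ?thesis
    using assms(2-6) by (rule preserves_parallel_maps_face)
next
  assume "preserves_TEA T"
  then show ?thesis
    using assms(4-6) by (rule preserves_TEA_maps_face)
qed

lemma exists_face_map:
  assumes "linear T" and "surj T"
    and maps_face: "\<And>z \<phi> g u. active z = {\<phi>} \<Longrightarrow> active (T z) = {g} \<Longrightarrow> \<phi> \<in> active u \<Longrightarrow> g \<in> active (T u)"
  shows "\<exists>\<sigma>. \<forall>\<phi> u. \<phi> \<in> active u \<longrightarrow> \<sigma> \<phi> \<in> active (T u)"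
proof -
  have "\<forall>\<phi>\<in>F. \<exists>g z. active z = {\<phi>} \<and> active (T z) = {g}"
    using exists_active_singleton exists_active_singleton_image[OF assms(1,2)] by blast
  then have "\<exists>\<sigma>. \<forall>\<phi>\<in>F. \<exists>z. active z = {\<phi>} \<and> active (T z) = {\<sigma> \<phi>}"
    by (rule bchoice)
  then obtain \<sigma> where \<sigma>: "\<forall>\<phi>\<in>F. \<exists>z. active z = {\<phi>} \<and> active (T z) = {\<sigma> \<phi>}"
    by (rule exE)
  have "\<sigma> \<phi> \<in> active (T u)" if "\<phi> \<in> active u" for \<phi> u
  proof -
    have "\<phi> \<in> F"
      using that by (simp add: active_def)
    then obtain z where "active z = {\<phi>}" and "active (T z) = {\<sigma> \<phi>}"
      using \<sigma> by blast
    then show ?thesis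
      using maps_face that by blast
  qed
  then show ?thesis
    by blast
qed

lemma card_active_le_card_active_image:
  assumes "linear T" and "bij T"
    and maps_face: "\<And>z \<phi> g u. active z = {\<phi>} \<Longrightarrow> active (T z) = {g} \<Longrightarrow> \<phi> \<in> active u \<Longrightarrow> g \<in> active (T u)"
  shows "card (active x) \<le> card (active (T x))"
proof -
  have "\<exists>\<sigma>. \<forall>\<phi> u. \<phi> \<in> active u \<longrightarrow> \<sigma> \<phi> \<in> active (T u)"
    by (rule exists_face_map[OF assms(1) bij_is_surj[OF assms(2)]]) (rule maps_face)
  then obtain \<sigma> where \<sigma>_face: "\<And>\<phi> u. \<phi> \<in> active u \<Longrightarrow> \<sigma> \<phi> \<in> active (T u)"
    by blast
  have "F \<subseteq> \<sigma> ` F"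
  proof
    fix g
    assume "g \<in> F"
    then obtain y where "active y = {g}"
      using exists_active_singleton by blast
    obtain u where "y = T u"
      using assms(2) by (rule bij_pointE)
    obtain \<phi> where "\<phi> \<in> active u"
      using active_nonempty by blast
    then have "\<sigma> \<phi> = g"
      using \<sigma>_face \<open>active y = {g}\<close> \<open>y = T u\<close> by blast
    then show "g \<in> \<sigma> ` F"
      using \<open>\<phi> \<in> active u\<close> by (auto simp: active_def)
  qed
  then have "inj_on \<sigma> F"
    using finite_F by (rule finite_surj_inj[rotated])
  then have "inj_on \<sigma> (active x)"
    by (rule inj_on_subset) (auto simp: active_def)
  then have "card (active x) = card (\<sigma> ` active x)"
    by (simp add: card_image)
  also have "\<dots> \<le> card (active (T x))"
    using \<sigma>_face finite_active by (intro card_mono) auto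
  finally show ?thesis .
qed

end

lemma exists_polyhedral_norm:
  fixes x :: "'a::real_normed_vector"
  assumes "fin_dim_space TYPE('a)" and "polyhedral_space TYPE('a)" and "x \<noteq> 0"
  obtains F :: "('a \<Rightarrow> real) set" where "polyhedral_norm F"
proof -
  obtain F0 :: "('a \<Rightarrow> real) set" where F0: "finite F0" "F0 \<noteq> {}" "\<And>\<phi>. \<phi> \<in> F0 \<Longrightarrow> linear \<phi>"
    "cball 0 1 = {y. \<forall>\<phi>\<in>F0. \<phi> y \<le> 1}"
    by (rule unit_ball_eq_finite_halfspaces[OF assms], rule that)
  have norm_F0: "\<And>y. norm y = Max ((\<lambda>\<phi>. \<phi> y) ` F0)"
    using F0 by (rule norm_eq_Max_if_unit_ball_eq)
  obtain F where F: "F \<subseteq> F0" "F \<noteq> {}" "\<And>y. norm y = Max ((\<lambda>\<phi>. \<phi> y) ` F)"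
    "\<And>\<phi>. \<phi> \<in> F \<Longrightarrow> \<exists>y. \<forall>\<theta>\<in>F - {\<phi>}. \<theta> y < \<phi> y"
    by (rule exists_irredundant_Max_subfamily[OF F0(1,2) norm_F0], rule that)
  have "finite F"
    using F(1) F0(1) by (rule finite_subset)
  moreover have "\<And>\<phi>. \<phi> \<in> F \<Longrightarrow> linear \<phi>"
    using F(1) F0(3) by blast
  ultimately have "polyhedral_norm F"
    using F(2-4) by (intro polyhedral_norm.intro)
  then show thesis
    by (rule that)
qed

theorem mainTheorem18:
  fixes T :: "'a::banach \<Rightarrow> 'a"
  assumes "fin_dim_space TYPE('a)"
    and "polyhedral_space TYPE('a)"
    and "bounded_linear T" and "bij T"
    and "preserves_parallel T \<or> preserves_TEA T"
    and "x \<noteq> 0" and "\<not> smooth_point x"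
  shows "\<not> smooth_point (T x)"
proof
  assume "smooth_point (T x)"
  obtain F :: "('a \<Rightarrow> real) set" where "polyhedral_norm F"
    using exists_polyhedral_norm assms(1,2,6) by blast
  then interpret polyhedral_norm F .
  have "linear T" and "inj T"
    using assms(3,4) bounded_linear.linear bij_is_inj by auto
  then have "T x \<noteq> 0"
    using assms(6) linear_injective_0 by blast
  have "card (active x) \<le> card (active (T x))"
    by (rule card_active_le_card_active_image[OF \<open>linear T\<close> assms(4)
          preserving_maps_face[OF assms(5) \<open>linear T\<close> \<open>inj T\<close>]])
  moreover have "card (active (T x)) = 1"
    using \<open>smooth_point (T x)\<close> smooth_point_iff_card_active[OF \<open>T x \<noteq> 0\<close>] by blast
  moreover have "card (active x) \<noteq> 1"
    using smooth_point_iff_card_active assms(6,7) by blast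
  moreover have "card (active x) \<noteq> 0"
    using active_nonempty finite_active by simp
  ultimately show False
    by linarith
qed

end
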